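(* Let $P\in\mathbb{R}_+^{n\times n}$ be sub-stochastic, $w\in\mathbb{R}^n_+$, $c\in\mathbb{R}^n$, and let $\mathcal X=\{x\in\mathbb{R}^n:\,x=S_0^w(P'x+c)\}$. For $x\in\mathcal X$ define the partition $\mathcal V=\{1,\dots,n\}=\mathcal V^x_-\cup\mathcal V^x_0\cup\mathcal V^x_+$ by $\mathcal V^x_+=\{i:\,c_i+\sum_{k}P_{ki}x_k>w_i\}$, $\mathcal V^x_0=\{i:\,0\le c_i+\sum_kP_{ki}x_k\le w_i\}$, $\mathcal V^x_-=\{i:\,c_i+\sum_kP_{ki}x_k<0\}$. Then this partition is the same for all equilibria $x\in\mathcal X$.
   Context: $P$ sub-stochastic means $P$ nonnegative with $P\mathbbm{1}\le\mathbbm{1}$ (stochastic matrices included). $(S_0^w(x))_i=\min\{\max\{x_i,0\},w_i\}$; $P'$ is the transpose. *)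

theory Defs
  imports "HOL-Analysis.Analysis"
begin

definition substochastic :: "real^'n^'n \<Rightarrow> bool" where
  "substochastic P \<longleftrightarrow> (\<forall>i j. P $ i $ j \<ge> 0) \<and> (\<forall>i. (\<Sum>j\<in>UNIV. P $ i $ j) \<le> 1)"

definition sat0 :: "real^'n \<Rightarrow> real^'n \<Rightarrow> real^'n" where
  "sat0 w x = (\<chi> i. min (max (x $ i) 0) (w $ i))"

definition inp :: "real^'n^'n \<Rightarrow> real^'n \<Rightarrow> real^'n \<Rightarrow> 'n \<Rightarrow> real" where
  "inp P c x i = c $ i + (\<Sum>k\<in>UNIV. P $ k $ i * x $ k)"

definition equilibria :: "real^'n^'n \<Rightarrow> real^'n \<Rightarrow> real^'n \<Rightarrow> (real^'n) set" where
  "equilibria P w c = {x. x = sat0 w (transpose P *v x + c)}"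

definition Vplus where "Vplus P w c x = {i. inp P c x i > w $ i}"
definition Vzero where "Vzero P w c x = {i. 0 \<le> inp P c x i \<and> inp P c x i \<le> w $ i}"
definition Vminus where "Vminus P w c x = {i. inp P c x i < 0}"

end

theory Submission
  imports Defs
begin

text \<open>Write \<open>u = P' x + c\<close> and \<open>v = P' y + c\<close> for two equilibria, so that \<open>x = S(u)\<close> and
  \<open>y = S(v)\<close> with the componentwise clamp \<open>S\<close>. Since the clamp is 1-Lipschitz and \<open>P\<close> is
  nonnegative, \<open>|x - y| \<le> |u - v| \<le> P' |x - y|\<close> componentwise. Summing over all components,
  the row sums of \<open>P\<close> being at most 1 give \<open>\<Sum> P' |x - y| \<le> \<Sum> |x - y|\<close>, so all these
  inequalities are equalities. But the clamp preserves the distance of \<open>u_i\<close> and \<open>v_i\<close> only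
  if both lie on the same side of \<open>0\<close> and on the same side of \<open>w_i\<close>.\<close>

lemma clamp_dist_le:
  fixes a b w :: real
  shows "\<bar>min (max a 0) w - min (max b 0) w\<bar> \<le> \<bar>a - b\<bar>"
  by (auto simp: min_def max_def)

lemma clamp_dist_ge_imp_same_side:
  fixes a b w :: real
  assumes "\<bar>a - b\<bar> \<le> \<bar>min (max a 0) w - min (max b 0) w\<bar>"
  shows "(a < 0 \<longleftrightarrow> b < 0) \<and> (w < a \<longleftrightarrow> w < b)"
  using assms by (auto simp: min_def max_def split: if_splits)

lemma sat0_nth: "sat0 w x $ i = min (max (x $ i) 0) (w $ i)"
  by (simp add: sat0_def)

lemma inp_eq_nth: "inp P c x i = (transpose P *v x + c) $ i"
  by (simp add: inp_def matrix_vector_mult_def transpose_def add.commute)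

lemma equilibria_nth:
  assumes "x \<in> equilibria P w c"
  shows "x $ i = min (max (inp P c x i) 0) (w $ i)"
proof -
  have "x $ i = sat0 w (transpose P *v x + c) $ i"
    using assms by (simp add: equilibria_def)
  then show ?thesis
    by (simp add: sat0_nth inp_eq_nth)
qed

lemma substochastic_sum_transpose_mult_le:
  assumes "substochastic P" and "\<And>k. d $ k \<ge> 0"
  shows "(\<Sum>i\<in>UNIV. (transpose P *v d) $ i) \<le> (\<Sum>k\<in>UNIV. d $ k)"
proof -
  have "(\<Sum>i\<in>UNIV. (transpose P *v d) $ i) = (\<Sum>i\<in>UNIV. \<Sum>k\<in>UNIV. P $ k $ i * d $ k)"
    by (simp add: matrix_vector_mult_def transpose_def)
  also have "\<dots> = (\<Sum>k\<in>UNIV. d $ k * (\<Sum>i\<in>UNIV. P $ k $ i))"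
    by (subst sum.swap) (simp add: sum_distrib_left mult.commute)
  also have "\<dots> \<le> (\<Sum>k\<in>UNIV. d $ k)"
    using assms by (intro sum_mono mult_left_le) (auto simp: substochastic_def)
  finally show ?thesis .
qed

lemma inp_dist_le:
  assumes "\<And>k j. P $ k $ j \<ge> 0"
  shows "\<bar>inp P c x i - inp P c y i\<bar> \<le> (transpose P *v (\<chi> k. \<bar>x $ k - y $ k\<bar>)) $ i"
proof -
  have "inp P c x i - inp P c y i = (\<Sum>k\<in>UNIV. P $ k $ i * (x $ k - y $ k))"
    by (simp add: inp_def algebra_simps sum_subtractf)
  also have "\<bar>\<dots>\<bar> \<le> (\<Sum>k\<in>UNIV. \<bar>P $ k $ i * (x $ k - y $ k)\<bar>)"
    by (rule sum_abs)
  also have "\<dots> = (transpose P *v (\<chi> k. \<bar>x $ k - y $ k\<bar>)) $ i"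
    using assms by (simp add: matrix_vector_mult_def transpose_def abs_mult)
  finally show ?thesis .
qed

lemma equilibria_inp_dist_le:
  assumes "substochastic P" and "x \<in> equilibria P w c" and "y \<in> equilibria P w c"
  shows "\<bar>inp P c x i - inp P c y i\<bar> \<le> \<bar>x $ i - y $ i\<bar>"
proof -
  define d where "d = (\<chi> k. \<bar>x $ k - y $ k\<bar>)"
  have d_le: "d $ k \<le> (transpose P *v d) $ k" for k
  proof -
    have "d $ k = \<bar>min (max (inp P c x k) 0) (w $ k) - min (max (inp P c y k) 0) (w $ k)\<bar>"
      by (simp add: d_def equilibria_nth[OF assms(2)] equilibria_nth[OF assms(3)])
    also have "\<dots> \<le> \<bar>inp P c x k - inp P c y k\<bar>"
      by (rule clamp_dist_le)
    also have "\<dots> \<le> (transpose P *v d) $ k"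
      unfolding d_def using assms(1) by (intro inp_dist_le) (simp add: substochastic_def)
    finally show ?thesis .
  qed
  have "(transpose P *v d) $ i = d $ i"
  proof (rule ccontr)
    assume "(transpose P *v d) $ i \<noteq> d $ i"
    with d_le have "d $ i < (transpose P *v d) $ i"
      by (simp add: order_less_le)
    then have "(\<Sum>k\<in>UNIV. d $ k) < (\<Sum>k\<in>UNIV. (transpose P *v d) $ k)"
      using d_le by (intro sum_strict_mono_ex1) auto
    moreover have "(\<Sum>k\<in>UNIV. (transpose P *v d) $ k) \<le> (\<Sum>k\<in>UNIV. d $ k)"
      using assms(1) by (rule substochastic_sum_transpose_mult_le) (simp add: d_def)
    ultimately show False
      by linarith
  qed
  then show ?thesis
    using assms(1) inp_dist_le[of P c x i y] by (simp add: d_def substochastic_def)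
qed

theorem proposition2:
  fixes P :: "real^'n^'n" and w c :: "real^'n"
  assumes "substochastic P"
    and "\<forall>i. w $ i \<ge> 0"
    and "x \<in> equilibria P w c" and "y \<in> equilibria P w c"
  shows "Vminus P w c x = Vminus P w c y \<and> Vzero P w c x = Vzero P w c y
         \<and> Vplus P w c x = Vplus P w c y"
proof -
  have "(inp P c x i < 0 \<longleftrightarrow> inp P c y i < 0) \<and> (w $ i < inp P c x i \<longleftrightarrow> w $ i < inp P c y i)"
    for i
    using equilibria_inp_dist_le[OF assms(1,3,4), of i]
    unfolding equilibria_nth[OF assms(3), of i] equilibria_nth[OF assms(4), of i]
    by (rule clamp_dist_ge_imp_same_side)
  then show ?thesis
    unfolding Vminus_def Vzero_def Vplus_def by (auto simp: not_less[symmetric])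
qed

end
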